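(* Assume $f$ is in Case 4 and $(n_1,m_1)\neq(0,\delta)$. Then, for every sufficiently small $r>0$, $A_f^{l,+}=A_0\setminus E_z$ for every $0<l<\alpha$.
   Context: Let $f(z,w)=(p(z),q(z,w))$ be a holomorphic skew product defined on $\mathbb{C}^2$ or on $\{|z|<R\}\times\mathbb{C}$, where $R$ is so large that the attracting basin of $p$ at $0$ is relatively compact in $\{|z|<R\}$. Assume $p(z)=az^{\delta}+O(z^{\delta+1})$, $a\neq0$, $\delta\ge2$, and $q(z,w)=\sum_{i,j\ge0}b_{ij}z^iw^j$ with $b_{00}=b_{01}=0$. The Newton polygon $N(q)$ is the convex hull of $\bigcup_{b_{ij}\ne0}\{(x,y):x\ge i,\ y\ge j\}$, with vertices $(n_1,m_1),\dots,(n_s,m_s)$, $n_1<\dots<n_s$, $m_1>\dots>m_s$. For $1\le k\le s-1$, $T_k$ is the $y$-intercept of the line through $(n_k,m_k)$ and $(n_{k+1},m_{k+1})$. Case 4 means $s>2$ and $T_k\le\delta\le T_{k-1}$ for some $2\le k\le s-1$; set $(\gamma,d)=(n_k,m_k)$ and $\alpha=\gamma/(\delta-d)$. For $l>0$, $U^{l,+}=\{|z|<r,\ |w|<r|z|^l\}$ and $A_f^{l,+}=\bigcup_{n\ge0}f^{-n}(U^{l,+})$. $A_0$ is the attracting basin of the origin for $f$ and $E_z=\bigcup_{n\ge0}f^{-n}(\{z=0\})$. *)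

theory Defs
  imports "HOL-Analysis.Analysis"
begin

definition skew :: "(complex \<Rightarrow> complex) \<Rightarrow> (complex \<Rightarrow> complex \<Rightarrow> complex)
    \<Rightarrow> complex \<times> complex \<Rightarrow> complex \<times> complex" where
  "skew p q = (\<lambda>(z,w). (p z, q z w))"

text \<open>n-th preimage of U under F, where F is only defined on D
  (all intermediate iterates must lie in D).\<close>
definition preim :: "('a set) \<Rightarrow> ('a \<Rightarrow> 'a) \<Rightarrow> nat \<Rightarrow> 'a set \<Rightarrow> 'a set" where
  "preim D F n U = {x \<in> D. (\<forall>k<n. (F ^^ k) x \<in> D) \<and> (F ^^ n) x \<in> U}"

definition basin :: "('a::topological_space) set \<Rightarrow> ('a \<Rightarrow> 'a) \<Rightarrow> 'a \<Rightarrow> 'a set" where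
  "basin D F x0 = {x. (\<forall>k. (F ^^ k) x \<in> D) \<and> (\<lambda>k. (F ^^ k) x) \<longlonglongrightarrow> x0}"

definition Ez :: "(complex \<times> complex) set \<Rightarrow> (complex \<times> complex \<Rightarrow> complex \<times> complex)
    \<Rightarrow> (complex \<times> complex) set" where
  "Ez D F = (\<Union>n. preim D F n {x. fst x = 0})"

definition Ulp :: "real \<Rightarrow> real \<Rightarrow> (complex \<times> complex) set" where
  "Ulp r l = {(z,w). norm z < r \<and> norm w < r * norm z powr l}"

definition Alp :: "(complex \<times> complex) set \<Rightarrow> (complex \<times> complex \<Rightarrow> complex \<times> complex)
    \<Rightarrow> real \<Rightarrow> real \<Rightarrow> (complex \<times> complex) set" where
  "Alp D F r l = (\<Union>n. preim D F n (Ulp r l))"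

text \<open>Newton polygon of q = sum b_ij z^i w^j.\<close>
definition newton_polygon :: "(nat \<Rightarrow> nat \<Rightarrow> complex) \<Rightarrow> (real \<times> real) set" where
  "newton_polygon b = convex hull
     (\<Union> {{(x,y). x \<ge> real i \<and> y \<ge> real j} | i j. b i j \<noteq> 0})"

definition newton_vertices :: "(nat \<Rightarrow> nat \<Rightarrow> complex) \<Rightarrow> nat \<Rightarrow> (nat \<Rightarrow> nat) \<Rightarrow> (nat \<Rightarrow> nat) \<Rightarrow> bool" where
  "newton_vertices b s nv mv \<longleftrightarrow>
     {v. v extreme_point_of newton_polygon b} = {(real (nv k), real (mv k)) | k. k \<in> {1..s}}
     \<and> (\<forall>i\<in>{1..s}. \<forall>j\<in>{1..s}. i < j \<longrightarrow> nv i < nv j \<and> mv i > mv j)"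

text \<open>y-intercept of the line through (n_k,m_k) and (n_{k+1},m_{k+1}).\<close>
definition Tint :: "(nat \<Rightarrow> nat) \<Rightarrow> (nat \<Rightarrow> nat) \<Rightarrow> nat \<Rightarrow> real" where
  "Tint nv mv k = real (mv k) + real (nv k) * (real (mv k) - real (mv (k+1)))
                     / (real (nv (k+1)) - real (nv k))"

end

theory Submission
  imports Defs
begin

lemma newton_polygon_eq:
  "newton_polygon b =
     convex hull {x. \<exists>i j. b i j \<noteq> 0 \<and> real i \<le> fst x \<and> real j \<le> snd x}"
proof -
  have "\<Union> {{(x, y). real i \<le> x \<and> real j \<le> y} | i j. b i j \<noteq> 0}
      = {x. \<exists>i j. b i j \<noteq> 0 \<and> real i \<le> fst x \<and> real j \<le> snd x}"
    by (auto simp: split_beta) blast+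
  thus ?thesis
    by (simp add: newton_polygon_def)
qed

lemma newton_polygon_translate_up:
  assumes "x \<in> newton_polygon b" "0 \<le> c"
  shows "x + (0, c) \<in> newton_polygon b"
proof -
  define X where "X = {x. \<exists>i j. b i j \<noteq> 0 \<and> real i \<le> fst x \<and> real j \<le> snd x}"
  have "(0, c) + x \<in> (\<lambda>x. (0, c) + x) ` (convex hull X)"
    using assms(1) by (simp add: newton_polygon_eq X_def)
  also have "\<dots> = convex hull ((\<lambda>x. (0, c) + x) ` X)"
    by (rule convex_hull_translation[symmetric])
  also have "\<dots> \<subseteq> convex hull X"
    using assms(2) by (intro hull_mono) (auto simp: X_def image_iff, metis add_increasing)
  finally show ?thesis
    by (simp add: newton_polygon_eq X_def add.commute)
qed

lemma newton_vertex_extreme: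
  assumes "newton_vertices b s nv mv" "k \<in> {1..s}"
  shows "(real (nv k), real (mv k)) extreme_point_of newton_polygon b"
  using assms unfolding newton_vertices_def by blast

lemma newton_vertices_strict_mono:
  assumes "newton_vertices b s nv mv" "1 \<le> i" "i < j" "j \<le> s"
  shows "nv i < nv j" "mv j < mv i"
  using assms unfolding newton_vertices_def by auto

lemma newton_vertices_below_chord:
  assumes V: "newton_vertices b s nv mv" and i: "1 \<le> i1" "i1 < i2" "i2 < i3" "i3 \<le> s"
  shows "(real (nv i3) - nv i1) * mv i2 \<le> (real (nv i3) - nv i2) * mv i1 + (real (nv i2) - nv i1) * mv i3"
proof (rule ccontr)
  assume above: "\<not> ?thesis"
  have n12: "nv i1 < nv i2" and n23: "nv i2 < nv i3"
    using newton_vertices_strict_mono[OF V] i by auto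
  have in_N: "(real (nv i), real (mv i)) \<in> newton_polygon b" if "i \<in> {i1, i3}" for i
    using newton_vertex_extreme[OF V, of i] that i by (auto simp: extreme_point_of_def)
  define t where "t = (real (nv i3) - nv i2) / (real (nv i3) - nv i1)"
  have t: "0 \<le> t" "t \<le> 1" "t * (real (nv i3) - nv i1) = real (nv i3) - nv i2"
    using n12 n23 by (auto simp: t_def field_simps)
  define x where "x = t *\<^sub>R (real (nv i1), real (mv i1)) + (1 - t) *\<^sub>R (real (nv i3), real (mv i3))"
  have x: "x \<in> newton_polygon b"
    unfolding x_def using t in_N
    by (intro convexD) (auto simp: newton_polygon_def)
  have "fst x = nv i2"
    using t(3) by (simp add: x_def algebra_simps)
  have "(real (nv i3) - nv i1) * snd x
      = t * (real (nv i3) - nv i1) * mv i1 + ((real (nv i3) - nv i1) - t * (real (nv i3) - nv i1)) * mv i3"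
    by (simp add: x_def algebra_simps)
  also have "\<dots> = (real (nv i3) - nv i2) * mv i1 + (real (nv i2) - nv i1) * mv i3"
    using t(3) by simp
  finally have "(real (nv i3) - nv i1) * snd x < (real (nv i3) - nv i1) * mv i2"
    using above by linarith
  hence "snd x < mv i2"
    using n12 n23 by (simp add: mult_less_cancel_left_pos)
  define c where "c = mv i2 - snd x"
  have "(real (nv i2), real (mv i2)) \<in> open_segment x (x + (0, 2 * c))"
    using \<open>snd x < mv i2\<close> \<open>fst x = nv i2\<close>
    by (auto simp: in_segment c_def prod_eq_iff algebra_simps intro!: exI[of _ "1/2"])
  moreover have "x + (0, 2 * c) \<in> newton_polygon b"
    using x \<open>snd x < mv i2\<close> by (intro newton_polygon_translate_up) (auto simp: c_def)
  ultimately show False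
    using newton_vertex_extreme[OF V, of i2] x i by (auto simp: extreme_point_of_def)
qed

lemma eq_of_convex_comb_eq_lower_bound:
  fixes x y c u :: real
  assumes "c = (1 - u) * x + u * y" "c \<le> x" "c \<le> y" "0 < u" "u < 1"
  shows "x = c \<and> y = c"
proof -
  have "(1 - u) * (x - c) + u * (y - c) = 0"
    using assms(1) by (simp add: algebra_simps)
  moreover have "0 \<le> (1 - u) * (x - c)" "0 \<le> u * (y - c)"
    using assms by simp_all
  ultimately have "(1 - u) * (x - c) = 0" "u * (y - c) = 0"
    by linarith+
  thus ?thesis
    using assms by simp
qed

definition lex_upper_set :: "real \<Rightarrow> real \<Rightarrow> real \<Rightarrow> real \<Rightarrow> (real \<times> real) set" where
  "lex_upper_set L M c d =
     {x. c < L * fst x + M * snd x \<or> (L * fst x + M * snd x = c \<and> d \<le> snd x)}"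

lemma convex_lex_upper_set: "convex (lex_upper_set L M c d)"
  unfolding convex_def
proof (intro ballI allI impI)
  fix x y :: "real \<times> real" and u v :: real
  assume x: "x \<in> lex_upper_set L M c d" and y: "y \<in> lex_upper_set L M c d"
    and uv: "0 \<le> u" "0 \<le> v" "u + v = 1"
  define a where "a = L * fst x + M * snd x"
  define a' where "a' = L * fst y + M * snd y"
  have "c \<le> a" "c \<le> a'"
    using x y by (auto simp: lex_upper_set_def a_def a'_def)
  hence ua: "u * c \<le> u * a" and va: "v * c \<le> v * a'"
    using uv by (simp_all add: mult_left_mono)
  have c_eq: "c = u * c + v * c"
    using uv by (metis distrib_right mult_1)
  have lin: "L * fst (u *\<^sub>R x + v *\<^sub>R y) + M * snd (u *\<^sub>R x + v *\<^sub>R y) = u * a + v * a'"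
    by (simp add: a_def a'_def algebra_simps)
  show "u *\<^sub>R x + v *\<^sub>R y \<in> lex_upper_set L M c d"
  proof (cases "u * a + v * a' = c")
    case False
    thus ?thesis
      using lin ua va c_eq by (simp add: lex_upper_set_def)
  next
    case True
    hence "u * a = u * c" "v * a' = v * c"
      using ua va c_eq by linarith+
    hence "u = 0 \<or> a = c" "v = 0 \<or> a' = c"
      by simp_all
    hence "u * d \<le> u * snd x" "v * d \<le> v * snd y"
      using x y uv by (auto simp: lex_upper_set_def a_def a'_def intro: mult_left_mono)
    hence "d \<le> u * snd x + v * snd y"
      using uv by (metis add_mono distrib_right mult_1)
    thus ?thesis
      using True lin by (simp add: lex_upper_set_def)
  qed
qed

lemma lex_upper_set_upward_closed:
  assumes "0 < L" "0 < M" "(x, y) \<in> lex_upper_set L M c d" "x \<le> x'" "y \<le> y'"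
  shows "(x', y') \<in> lex_upper_set L M c d"
proof (cases "x = x' \<and> y = y'")
  case False
  have "L * x \<le> L * x'" "M * y \<le> M * y'"
    using assms by simp_all
  moreover have "L * x < L * x' \<or> M * y < M * y'"
    using assms False by auto
  ultimately have "L * x + M * y < L * x' + M * y'"
    by linarith
  thus ?thesis
    using assms(3) by (auto simp: lex_upper_set_def)
qed (use assms in simp)

lemma extreme_point_of_lex_minimum:
  assumes "0 < L" "S \<subseteq> lex_upper_set L M c d" "v \<in> S"
    and "L * fst v + M * snd v = c" "snd v = d"
  shows "v extreme_point_of S"
  unfolding extreme_point_of_def
proof (intro conjI ballI notI \<open>v \<in> S\<close>)
  fix x y assume xy: "x \<in> S" "y \<in> S" "v \<in> open_segment x y"
  then obtain u where "x \<noteq> y" and u: "0 < u" "u < 1" and v: "v = (1 - u) *\<^sub>R x + u *\<^sub>R y"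
    by (auto simp: in_segment)
  have x: "x \<in> lex_upper_set L M c d" and y: "y \<in> lex_upper_set L M c d"
    using xy assms(2) by auto
  define a where "a = L * fst x + M * snd x"
  define a' where "a' = L * fst y + M * snd y"
  have "c \<le> a" "c \<le> a'"
    using x y by (auto simp: lex_upper_set_def a_def a'_def)
  moreover have "c = (1 - u) * a + u * a'"
    using assms(4) by (simp add: v a_def a'_def algebra_simps)
  ultimately have "a = c" "a' = c"
    using eq_of_convex_comb_eq_lower_bound u by blast+
  hence "d \<le> snd x" "d \<le> snd y"
    using x y by (auto simp: lex_upper_set_def a_def a'_def)
  moreover have "d = (1 - u) * snd x + u * snd y"
    using assms(5) by (simp add: v)
  ultimately have "snd x = d" "snd y = d"
    using eq_of_convex_comb_eq_lower_bound u by blast+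
  hence "L * fst x + M * d = L * fst y + M * d"
    using \<open>a = c\<close> \<open>a' = c\<close> by (simp add: a_def a'_def)
  hence "fst x = fst y"
    using \<open>0 < L\<close> by simp
  thus False
    using \<open>x \<noteq> y\<close> \<open>snd x = d\<close> \<open>snd y = d\<close> by (simp add: prod_eq_iff)
qed

lemma finite_weight_sublevel:
  fixes L M c :: real
  assumes L: "0 < L" and M: "0 < M"
  shows "finite {(i, j). L * real i + M * real j \<le> c}"
proof -
  obtain N :: nat where N: "c / L \<le> N" "c / M \<le> N"
    using real_arch_simple[of "max (c / L) (c / M)"] by auto
  have "{(i, j). L * real i + M * real j \<le> c} \<subseteq> {..N} \<times> {..N}"
  proof safe
    fix i j :: nat assume "L * i + M * j \<le> c"
    moreover have "0 \<le> L * i" "0 \<le> M * j"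
      using L M by simp_all
    ultimately have "L * i \<le> c" "M * j \<le> c"
      by linarith+
    hence "real i \<le> c / L" "real j \<le> c / M"
      using L M by (simp_all add: field_simps)
    hence "real i \<le> N" "real j \<le> N"
      using N by linarith+
    thus "i \<le> N" "j \<le> N"
      by simp_all
  qed
  thus ?thesis
    by (rule finite_subset) simp
qed

lemma exists_lex_minimal_monomial:
  fixes L M :: real
  assumes L: "0 < L" and M: "0 < M" and b0: "b i0 j0 \<noteq> 0"
  obtains i j where "b i j \<noteq> 0"
    "\<And>i' j'. b i' j' \<noteq> 0 \<Longrightarrow> (real i', real j') \<in> lex_upper_set L M (L * i + M * j) j"
proof -
  define F where "F = {(i, j). b i j \<noteq> 0 \<and> L * i + M * j \<le> L * i0 + M * j0}"
  have "finite F"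
    unfolding F_def
    by (rule finite_subset[OF _ finite_weight_sublevel[OF L M, of "L * i0 + M * j0"]]) blast
  define m where "m = Min ((\<lambda>(i, j). L * i + M * j) ` F)"
  have "(i0, j0) \<in> F"
    using b0 by (simp add: F_def)
  hence "m \<in> (\<lambda>(i, j). L * i + M * j) ` F"
    unfolding m_def using \<open>finite F\<close> by (intro Min_in) auto
  then obtain i1 j1 where "b i1 j1 \<noteq> 0" "L * i1 + M * j1 = m"
    by (auto simp: F_def)
  have m_le: "m \<le> L * i + M * j" if "b i j \<noteq> 0" for i j
  proof (cases "(i, j) \<in> F")
    case True
    thus ?thesis
      unfolding m_def using \<open>finite F\<close> by (auto intro: Min_le)
  next
    case False
    hence "L * i0 + M * j0 < L * i + M * j"
      using that by (simp add: F_def)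
    moreover have "m \<le> L * i0 + M * j0"
      unfolding m_def using \<open>finite F\<close> \<open>(i0, j0) \<in> F\<close> by (auto intro: Min_le)
    ultimately show ?thesis
      by simp
  qed
  define j where "j = (LEAST j. \<exists>i. b i j \<noteq> 0 \<and> L * i + M * j = m)"
  obtain i where ij: "b i j \<noteq> 0" "L * i + M * j = m"
    using LeastI[of "\<lambda>j. \<exists>i. b i j \<noteq> 0 \<and> L * i + M * j = m" j1] \<open>b i1 j1 \<noteq> 0\<close> \<open>L * i1 + M * j1 = m\<close>
    unfolding j_def by blast
  have "j \<le> j'" if "b i' j' \<noteq> 0" "L * i' + M * j' = m" for i' j'
    using that Least_le[of "\<lambda>j. \<exists>i. b i j \<noteq> 0 \<and> L * i + M * j = m" j'] unfolding j_def by blast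
  with m_le ij show thesis
    by (intro that[of i j]) (force simp: lex_upper_set_def)+
qed

lemma newton_vertex_minimizes_weight:
  fixes L M :: real
  assumes V: "newton_vertices b s nv mv" and L: "0 < L" and M: "0 < M" and b0: "b i0 j0 \<noteq> 0"
  shows "\<exists>k\<in>{1..s}. b (nv k) (mv k) \<noteq> 0 \<and> (\<forall>i j. b i j \<noteq> 0 \<longrightarrow> L * nv k + M * mv k \<le> L * i + M * j)"
proof -
  obtain i j where bij: "b i j \<noteq> 0"
    and lex: "\<And>i' j'. b i' j' \<noteq> 0 \<Longrightarrow> (real i', real j') \<in> lex_upper_set L M (L * i + M * j) j"
    using exists_lex_minimal_monomial[of L M b i0 j0] L M b0 by blast
  have "newton_polygon b \<subseteq> lex_upper_set L M (L * i + M * j) j"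
    unfolding newton_polygon_eq
  proof (rule hull_minimal)
    show "{x. \<exists>i j. b i j \<noteq> 0 \<and> real i \<le> fst x \<and> real j \<le> snd x} \<subseteq> lex_upper_set L M (L * i + M * j) j"
    proof
      fix x assume "x \<in> {x. \<exists>i j. b i j \<noteq> 0 \<and> real i \<le> fst x \<and> real j \<le> snd x}"
      then obtain i' j' where "b i' j' \<noteq> 0" "real i' \<le> fst x" "real j' \<le> snd x"
        by blast
      with lex_upper_set_upward_closed[OF L M lex[OF \<open>b i' j' \<noteq> 0\<close>]]
      show "x \<in> lex_upper_set L M (L * i + M * j) j"
        by (metis prod.collapse)
    qed
  qed (rule convex_lex_upper_set)
  moreover have "(real i, real j) \<in> newton_polygon b"
    unfolding newton_polygon_eq using bij by (intro hull_inc) auto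
  ultimately have "(real i, real j) extreme_point_of newton_polygon b"
    by (rule extreme_point_of_lex_minimum[OF L]) simp_all
  hence "(real i, real j) \<in> {(real (nv k), real (mv k)) | k. k \<in> {1..s}}"
    using V unfolding newton_vertices_def by blast
  then obtain k where "k \<in> {1..s}" "i = nv k" "j = mv k"
    by auto
  moreover have "L * i + M * j \<le> L * i' + M * j'" if "b i' j' \<noteq> 0" for i' j'
    using lex[OF that] by (auto simp: lex_upper_set_def)
  ultimately show ?thesis
    using bij by (intro bexI[of _ k]) auto
qed

lemma weighted_sum_le_imp_zero:
  fixes a a' :: nat and c :: real
  assumes le: "(c + 1) * a + a' \<le> c" and c: "0 \<le> c"
  shows "a = 0" "a' \<le> c"
proof -
  show "a = 0"
  proof (rule ccontr)
    assume "a \<noteq> 0"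
    hence "(c + 1) * 1 \<le> (c + 1) * a"
      using c by (intro mult_left_mono) auto
    moreover have "0 \<le> real a'"
      by simp
    ultimately show False
      using le by (smt (verit))
  qed
  thus "a' \<le> c"
    using le by simp
qed

lemma newton_vertex_on_vertical_axis:
  assumes V: "newton_vertices b s nv mv" and b: "b 0 j \<noteq> 0"
  obtains k where "k \<in> {1..s}" "b (nv k) (mv k) \<noteq> 0" "nv k = 0" "mv k \<le> j"
proof -
  have pos: "0 < real j + 1"
    by simp
  from newton_vertex_minimizes_weight[OF V pos zero_less_one b]
  obtain k where k: "k \<in> {1..s}" "b (nv k) (mv k) \<noteq> 0"
    and min: "\<forall>i' j'. b i' j' \<noteq> 0 \<longrightarrow> (real j + 1) * nv k + 1 * real (mv k) \<le> (real j + 1) * i' + 1 * real j'"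
    by (elim bexE conjE)
  have "(real j + 1) * nv k + mv k \<le> real j"
    using min[rule_format, OF b] by simp
  from weighted_sum_le_imp_zero[OF this of_nat_0_le_iff]
  have "nv k = 0" "mv k \<le> j"
    by simp_all
  with k show thesis
    by (rule that)
qed

lemma newton_vertex_on_horizontal_axis:
  assumes V: "newton_vertices b s nv mv" and b: "b i 0 \<noteq> 0"
  obtains k where "k \<in> {1..s}" "b (nv k) (mv k) \<noteq> 0" "mv k = 0" "nv k \<le> i"
proof -
  have pos: "0 < real i + 1"
    by simp
  from newton_vertex_minimizes_weight[OF V zero_less_one pos b]
  obtain k where k: "k \<in> {1..s}" "b (nv k) (mv k) \<noteq> 0"
    and min: "\<forall>i' j'. b i' j' \<noteq> 0 \<longrightarrow> 1 * real (nv k) + (real i + 1) * mv k \<le> 1 * real i' + (real i + 1) * j'"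
    by (elim bexE conjE)
  have "(real i + 1) * mv k + nv k \<le> real i"
    using min[rule_format, OF b] by simp
  from weighted_sum_le_imp_zero[OF this of_nat_0_le_iff]
  have "mv k = 0" "nv k \<le> i"
    by simp_all
  with k show thesis
    by (rule that)
qed

lemma monomial_le_vertex_monomial:
  fixes x y :: real
  assumes V: "newton_vertices b s nv mv" and x: "0 \<le> x" "x < 1" and y: "0 \<le> y" "y < 1"
    and bij: "b i j \<noteq> 0"
  obtains k where "k \<in> {1..s}" "b (nv k) (mv k) \<noteq> 0" "x ^ i * y ^ j \<le> x ^ nv k * y ^ mv k"
proof -
  consider "x ^ i * y ^ j = 0" | "x = 0" "i = 0" | "y = 0" "j = 0" | "0 < x" "0 < y"
    using x y by (cases "x = 0"; cases "y = 0") auto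
  thus thesis
  proof cases
    case 1
    from newton_vertex_minimizes_weight[OF V zero_less_one zero_less_one bij]
    obtain k where "k \<in> {1..s}" "b (nv k) (mv k) \<noteq> 0"
      by blast
    moreover have "x ^ i * y ^ j \<le> x ^ nv k * y ^ mv k"
      unfolding 1 using x y by simp
    ultimately show thesis
      by (rule that)
  next
    case 2
    then obtain k where "k \<in> {1..s}" "b (nv k) (mv k) \<noteq> 0" "nv k = 0" "mv k \<le> j"
      using newton_vertex_on_vertical_axis[OF V] bij by blast
    moreover from this have "x ^ i * y ^ j \<le> x ^ nv k * y ^ mv k"
      using 2 y by (simp add: power_decreasing)
    ultimately show thesis
      by (intro that) 
  next
    case 3
    then obtain k where "k \<in> {1..s}" "b (nv k) (mv k) \<noteq> 0" "mv k = 0" "nv k \<le> i"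
      using newton_vertex_on_horizontal_axis[OF V] bij by blast
    moreover from this have "x ^ i * y ^ j \<le> x ^ nv k * y ^ mv k"
      using 3 x by (simp add: power_decreasing)
    ultimately show thesis
      by (intro that)
  next
    case 4
    \<comment> \<open>for the weight \<open>(- ln x, - ln y)\<close>, a smaller weight is a larger monomial\<close>
    have "0 < - ln x" "0 < - ln y"
      using 4 x y by simp_all
    from newton_vertex_minimizes_weight[OF V this bij]
    obtain k where k: "k \<in> {1..s}" "b (nv k) (mv k) \<noteq> 0"
      and min: "\<forall>i' j'. b i' j' \<noteq> 0 \<longrightarrow> - ln x * nv k + - ln y * mv k \<le> - ln x * i' + - ln y * j'"
      by (elim bexE conjE)
    hence "exp (i * ln x + j * ln y) \<le> exp (nv k * ln x + mv k * ln y)"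
      using min[rule_format, OF bij] by (simp add: algebra_simps)
    hence "x ^ i * y ^ j \<le> x ^ nv k * y ^ mv k"
      using 4 by (simp add: exp_add exp_of_nat_mult)
    with k show thesis
      by (rule that)
  qed
qed

lemma local_min_imp_global_min_discrete_convex:
  fixes g x :: "nat \<Rightarrow> real"
  assumes x_mono: "\<And>i j. 1 \<le> i \<Longrightarrow> i < j \<Longrightarrow> j \<le> s \<Longrightarrow> x i < x j"
    and convex: "\<And>i1 i2 i3. 1 \<le> i1 \<Longrightarrow> i1 < i2 \<Longrightarrow> i2 < i3 \<Longrightarrow> i3 \<le> s \<Longrightarrow>
        (x i3 - x i1) * g i2 \<le> (x i3 - x i2) * g i1 + (x i2 - x i1) * g i3"
    and k: "1 < k" "k < s" and left: "g k \<le> g (k - 1)" and right: "g k \<le> g (k + 1)"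
    and j: "1 \<le> j" "j \<le> s"
  shows "g k \<le> g j"
proof -
  consider "j < k - 1" | "k - 1 \<le> j" "j \<le> k + 1" | "k + 1 < j"
    by linarith
  thus ?thesis
  proof cases
    case 1
    hence "j < k"
      by linarith
    have "(x k - x j) * g k \<le> (x k - x j) * g (k - 1)"
      using left x_mono[of j k] j k \<open>j < k\<close> by (intro mult_left_mono) simp_all
    moreover have "(x k - x j) * g (k - 1) \<le> (x k - x (k - 1)) * g j + (x (k - 1) - x j) * g k"
      using convex[of j "k - 1" k] j k 1 by simp
    ultimately have "(x k - x (k - 1)) * g k \<le> (x k - x (k - 1)) * g j"
      unfolding left_diff_distrib by linarith
    thus ?thesis
      using x_mono[of "k - 1" k] k by simp
  next
    case 2
    hence "j = k - 1 \<or> j = k \<or> j = k + 1"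
      by linarith
    thus ?thesis
      using left right by auto
  next
    case 3
    have "(x j - x k) * g k \<le> (x j - x k) * g (k + 1)"
      using right x_mono[of k j] j k 3 by (intro mult_left_mono) simp_all
    moreover have "(x j - x k) * g (k + 1) \<le> (x j - x (k + 1)) * g k + (x (k + 1) - x k) * g j"
      using convex[of k "k + 1" j] j k 3 by simp
    ultimately have "(x (k + 1) - x k) * g k \<le> (x (k + 1) - x k) * g j"
      unfolding left_diff_distrib by linarith
    thus ?thesis
      using x_mono[of k "k + 1"] k by simp
  qed
qed

lemma newton_vertices_weight_below_chord:
  fixes \<alpha> :: real
  assumes V: "newton_vertices b s nv mv" and \<alpha>: "0 \<le> \<alpha>"
    and i: "1 \<le> i1" "i1 < i2" "i2 < i3" "i3 \<le> s"
  shows "(real (nv i3) - nv i1) * (nv i2 + \<alpha> * mv i2)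
         \<le> (real (nv i3) - nv i2) * (nv i1 + \<alpha> * mv i1) + (real (nv i2) - nv i1) * (nv i3 + \<alpha> * mv i3)"
proof -
  have "\<alpha> * ((real (nv i3) - nv i1) * mv i2)
      \<le> \<alpha> * ((real (nv i3) - nv i2) * mv i1 + (real (nv i2) - nv i1) * mv i3)"
    using newton_vertices_below_chord[OF V i] \<alpha> by (rule mult_left_mono)
  thus ?thesis
    by (simp add: algebra_simps)
qed

lemma weight_le_of_intercept_le:
  fixes n m n' m' \<delta> :: real
  assumes "n < n'" "m' < m" "m < \<delta>" "m + n * (m - m') / (n' - n) \<le> \<delta>"
  shows "n + n / (\<delta> - m) * m \<le> n' + n / (\<delta> - m) * m'"
proof -
  have "n * (m - m') / (n' - n) \<le> \<delta> - m"
    using assms(4) by linarith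
  hence "n * (m - m') \<le> (\<delta> - m) * (n' - n)"
    using assms(1) by (simp add: pos_divide_le_eq)
  hence "n / (\<delta> - m) * (m - m') \<le> n' - n"
    using assms by (simp add: field_simps)
  thus ?thesis
    unfolding right_diff_distrib by linarith
qed

lemma weight_le_of_le_intercept:
  fixes n m n' m' \<delta> :: real
  assumes "n' < n" "m < m'" "m < \<delta>" "\<delta> \<le> m' + n' * (m' - m) / (n - n')"
  shows "n + n / (\<delta> - m) * m \<le> n' + n / (\<delta> - m) * m'"
proof -
  \<comment> \<open>both vertices lie on the line with this intercept\<close>
  have "m' + n' * (m' - m) / (n - n') = m + n * (m' - m) / (n - n')"
    using assms by (simp add: field_simps; simp add: algebra_simps)
  hence "\<delta> - m \<le> n * (m' - m) / (n - n')"
    using assms(4) by linarith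
  hence "(\<delta> - m) * (n - n') \<le> n * (m' - m)"
    using assms(1) by (simp add: pos_le_divide_eq)
  hence "n - n' \<le> n / (\<delta> - m) * (m' - m)"
    using assms by (simp add: field_simps)
  thus ?thesis
    unfolding right_diff_distrib by linarith
qed

lemma case4_vertex_weight_minimal:
  fixes \<delta> :: nat
  assumes V: "newton_vertices b s nv mv" and k: "1 < k" "k < s"
    and T: "Tint nv mv k \<le> \<delta>" "\<delta> \<le> Tint nv mv (k - 1)"
  shows "mv k < \<delta>"
    and "j \<in> {1..s} \<Longrightarrow>
           nv k + nv k / (\<delta> - real (mv k)) * mv k \<le> nv j + nv k / (\<delta> - real (mv k)) * mv j"
proof -
  have mono: "nv i < nv j" "mv j < mv i" if "1 \<le> i" "i < j" "j \<le> s" for i j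
    using newton_vertices_strict_mono[OF V that] by simp_all
  have "1 \<le> k - 1" "k - 1 < k" "k \<le> s" "1 \<le> k" "k < k + 1" "k + 1 \<le> s"
    using k by linarith+
  note left = mono[OF this(1-3)] and right = mono[OF this(4-6)]
  have "0 < nv k * (real (mv k) - mv (k + 1)) / (real (nv (k + 1)) - nv k)"
    using mono[of 1 k] right k by simp
  thus "mv k < \<delta>"
    using T(1) by (simp add: Tint_def)
  define \<alpha> where "\<alpha> = nv k / (\<delta> - real (mv k))"
  have "0 \<le> \<alpha>"
    using \<open>mv k < \<delta>\<close> by (simp add: \<alpha>_def)
  have to_right: "nv k + \<alpha> * mv k \<le> nv (k + 1) + \<alpha> * mv (k + 1)"
    unfolding \<alpha>_def using right \<open>mv k < \<delta>\<close> T(1)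
    by (intro weight_le_of_intercept_le) (simp_all add: Tint_def)
  have to_left: "nv k + \<alpha> * mv k \<le> nv (k - 1) + \<alpha> * mv (k - 1)"
    unfolding \<alpha>_def using left \<open>mv k < \<delta>\<close> T(2) k
    by (intro weight_le_of_le_intercept) (simp_all add: Tint_def)
  show "nv k + \<alpha> * mv k \<le> nv j + \<alpha> * mv j" if "j \<in> {1..s}"
  proof (rule local_min_imp_global_min_discrete_convex[where g = "\<lambda>j. nv j + \<alpha> * mv j" and x = "\<lambda>j. nv j"])
    show "real (nv i) < real (nv j)" if "1 \<le> i" "i < j" "j \<le> s" for i j
      using mono[OF that] by simp
  qed (use newton_vertices_weight_below_chord[OF V \<open>0 \<le> \<alpha>\<close>] k to_left to_right that in auto)
qed

lemma pos_of_interpolation: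
  fixes n t l \<alpha> :: real
  assumes "0 < n" "0 \<le> n + \<alpha> * t" "0 < l" "l < \<alpha>"
  shows "0 < n + l * t"
proof -
  have "0 < (\<alpha> - l) * n + l * (n + \<alpha> * t)"
    using assms by (intro add_pos_nonneg) simp_all
  also have "\<dots> = \<alpha> * (n + l * t)"
    by (simp add: algebra_simps)
  finally show ?thesis
    using assms by (simp add: zero_less_mult_iff)
qed

lemma case4_vertex_inequality:
  fixes \<delta> :: nat
  assumes V: "newton_vertices b s nv mv" and k: "1 < k" "k < s"
    and T: "Tint nv mv k \<le> \<delta>" "\<delta> \<le> Tint nv mv (k - 1)"
    and first_vertex: "(nv 1, mv 1) \<noteq> (0, \<delta>)"
    and l: "0 < l" "l < nv k / (\<delta> - real (mv k))" and j: "j \<in> {1..s}"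
  shows "\<delta> < nv j / l + mv j"
proof -
  define \<alpha> where "\<alpha> = nv k / (\<delta> - real (mv k))"
  have "mv k < \<delta>"
    by (rule case4_vertex_weight_minimal(1)[OF V k T])
  hence "\<alpha> * (\<delta> - real (mv k)) = nv k"
    by (simp add: \<alpha>_def)
  moreover have "nv k + \<alpha> * mv k \<le> nv j + \<alpha> * mv j"
    unfolding \<alpha>_def by (rule case4_vertex_weight_minimal(2)[OF V k T j])
  ultimately have weight: "0 \<le> nv j + \<alpha> * (real (mv j) - \<delta>)"
    by (simp add: algebra_simps)
  have "l < \<alpha>"
    using l by (simp add: \<alpha>_def)
  have "0 < nv j + l * (real (mv j) - \<delta>)"
  proof (cases "nv j = 0")
    case True
    \<comment> \<open>only the first vertex can lie on the axis, and it is not \<open>(0, \<delta>)\<close>\<close>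
    hence "j = 1"
      using newton_vertices_strict_mono(1)[OF V, of 1 j] j by (cases "j = 1") auto
    hence "mv j \<noteq> \<delta>"
      using first_vertex True by simp
    moreover have "\<delta> \<le> mv j"
      using weight True \<open>l < \<alpha>\<close> l by (simp add: zero_le_mult_iff)
    ultimately show ?thesis
      using True l by simp
  qed (use pos_of_interpolation weight \<open>l < \<alpha>\<close> l in auto)
  thus ?thesis
    using l by (simp add: field_simps)
qed

lemma monomial_le_vertex_monomials_sum:
  fixes x y \<rho> :: real
  assumes V: "newton_vertices b s nv mv" and \<rho>: "0 < \<rho>"
    and x: "0 \<le> x" "x < \<rho>" and y: "0 \<le> y" "y < \<rho>" and bij: "b i j \<noteq> 0"
  shows "x ^ i * y ^ j \<le> \<rho> ^ (i + j) *
           ((\<Sum>k\<in>{k\<in>{1..s}. b (nv k) (mv k) \<noteq> 0}. (1 / \<rho>) ^ (nv k + mv k)) *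
            (\<Sum>k\<in>{k\<in>{1..s}. b (nv k) (mv k) \<noteq> 0}. x ^ nv k * y ^ mv k))"
proof -
  define V where "V = {k\<in>{1..s}. b (nv k) (mv k) \<noteq> 0}"
  obtain k where "k \<in> V"
    and dom: "(x / \<rho>) ^ i * (y / \<rho>) ^ j \<le> (x / \<rho>) ^ nv k * (y / \<rho>) ^ mv k"
    using monomial_le_vertex_monomial[OF V, of "x / \<rho>" "y / \<rho>" i j] x y \<rho> bij
    by (auto simp: V_def)
  have "finite V"
    by (simp add: V_def)
  have "(1 / \<rho>) ^ (nv k + mv k) \<le> (\<Sum>k\<in>V. (1 / \<rho>) ^ (nv k + mv k))"
    using \<open>k \<in> V\<close> \<open>finite V\<close> \<rho> by (intro member_le_sum) auto
  moreover have "x ^ nv k * y ^ mv k \<le> (\<Sum>k\<in>V. x ^ nv k * y ^ mv k)"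
    using \<open>k \<in> V\<close> \<open>finite V\<close> x y by (intro member_le_sum) auto
  ultimately have "(1 / \<rho>) ^ (nv k + mv k) * (x ^ nv k * y ^ mv k)
      \<le> (\<Sum>k\<in>V. (1 / \<rho>) ^ (nv k + mv k)) * (\<Sum>k\<in>V. x ^ nv k * y ^ mv k)"
    using x y \<rho> by (intro mult_mono) (auto intro: sum_nonneg)
  hence "(x / \<rho>) ^ i * (y / \<rho>) ^ j
      \<le> (\<Sum>k\<in>V. (1 / \<rho>) ^ (nv k + mv k)) * (\<Sum>k\<in>V. x ^ nv k * y ^ mv k)"
    using dom by (simp add: power_divide power_add field_simps)
  hence "\<rho> ^ (i + j) * ((x / \<rho>) ^ i * (y / \<rho>) ^ j)
      \<le> \<rho> ^ (i + j) * ((\<Sum>k\<in>V. (1 / \<rho>) ^ (nv k + mv k)) * (\<Sum>k\<in>V. x ^ nv k * y ^ mv k))"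
    using \<rho> by (intro mult_left_mono) simp_all
  thus ?thesis
    using \<rho> by (simp add: V_def power_divide power_add field_simps)
qed

lemma norm_le_vertex_monomials_sum:
  fixes q :: "complex \<Rightarrow> complex \<Rightarrow> complex"
  assumes V: "newton_vertices b s nv mv" and \<rho>: "0 < \<rho>"
    and q: "\<And>z w. norm z < \<rho> \<Longrightarrow> norm w < \<rho> \<Longrightarrow>
              ((\<lambda>(i, j). b i j * z ^ i * w ^ j) has_sum q z w) UNIV"
  obtains K \<rho>1 where "0 < K" "0 < \<rho>1" "\<rho>1 < 1"
    "\<And>z w. norm z < \<rho>1 \<Longrightarrow> norm w < \<rho>1 \<Longrightarrow>
       norm (q z w) \<le> K * (\<Sum>k\<in>{k\<in>{1..s}. b (nv k) (mv k) \<noteq> 0}. norm z ^ nv k * norm w ^ mv k)"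
proof -
  define \<rho>1 where "\<rho>1 = min (\<rho> / 2) (1 / 2)"
  have \<rho>1: "0 < \<rho>1" "\<rho>1 < \<rho>" "\<rho>1 < 1"
    using \<rho> by (auto simp: \<rho>1_def)
  define V where "V = {k\<in>{1..s}. b (nv k) (mv k) \<noteq> 0}"
  define g where "g = (\<lambda>(i, j). norm (b i j) * \<rho>1 ^ (i + j))"
  have "(\<lambda>(i, j). b i j * of_real \<rho>1 ^ i * of_real \<rho>1 ^ j) summable_on UNIV"
    using q[of "of_real \<rho>1" "of_real \<rho>1"] \<rho>1 by (auto simp: summable_on_def)
  moreover have "(\<lambda>ij. norm ((\<lambda>(i, j). b i j * of_real \<rho>1 ^ i * of_real \<rho>1 ^ j) ij)) = g"
    using \<rho>1 by (auto simp: fun_eq_iff g_def norm_mult norm_power power_add)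
  ultimately have g: "g summable_on UNIV"
    by (simp add: summable_on_iff_abs_summable_on_complex)
  define C where "C = (\<Sum>k\<in>V. (1 / \<rho>1) ^ (nv k + mv k))"
  have "0 \<le> infsum g UNIV * C"
    unfolding C_def g_def using \<rho>1 by (intro mult_nonneg_nonneg infsum_nonneg sum_nonneg) auto
  define K where "K = infsum g UNIV * C + 1"
  have "norm (q z w) \<le> K * (\<Sum>k\<in>V. norm z ^ nv k * norm w ^ mv k)"
    if z: "norm z < \<rho>1" and w: "norm w < \<rho>1" for z w
  proof -
    define S where "S = (\<Sum>k\<in>V. norm z ^ nv k * norm w ^ mv k)"
    define f where "f = (\<lambda>(i, j). b i j * z ^ i * w ^ j)"
    have f_le: "norm (f ij) \<le> g ij * (C * S)" if "ij \<in> UNIV" for ij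
    proof (cases ij)
      case (Pair i j)
      have "norm z ^ i * norm w ^ j \<le> \<rho>1 ^ (i + j) * (C * S)" if "b i j \<noteq> 0"
        unfolding C_def S_def V_def
        using monomial_le_vertex_monomials_sum[OF V \<rho>1(1) _ z _ w that] by simp
      hence "norm (b i j) * (norm z ^ i * norm w ^ j) \<le> norm (b i j) * (\<rho>1 ^ (i + j) * (C * S))"
        by (cases "b i j = 0") (simp_all add: mult_left_mono)
      thus ?thesis
        by (simp add: Pair f_def g_def norm_mult norm_power mult.assoc)
    qed
    have "norm (q z w) \<le> infsum g UNIV * (C * S)"
      using q[of z w] z w \<rho>1
      by (intro norm_infsum_le[OF _ has_sum_cmult_left[OF has_sum_infsum[OF g]] f_le]) (simp_all add: f_def)
    also have "\<dots> \<le> K * S"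
      by (simp add: K_def S_def algebra_simps sum_nonneg)
    finally show ?thesis
      by (simp add: S_def)
  qed
  moreover have "0 < K"
    using \<open>0 \<le> infsum g UNIV * C\<close> by (simp add: K_def)
  ultimately show thesis
    using that \<rho>1 unfolding V_def by blast
qed

lemma monomial_le_linear_plus_square:
  fixes x y :: real
  assumes x: "0 \<le> x" "x < 1" and y: "0 \<le> y" "y < 1" and nm: "(n, m) \<notin> {(0, 0), (0, 1)}"
  shows "x ^ n * y ^ m \<le> x + y\<^sup>2"
proof (cases "n = 0")
  case True
  hence "2 \<le> m"
    using nm by auto
  hence "y ^ m \<le> y\<^sup>2"
    using y by (intro power_decreasing) simp_all
  thus ?thesis
    using True x by simp
next
  case False
  have "x ^ n * y ^ m \<le> x ^ 1 * 1"
    using False x y by (intro mult_mono power_decreasing power_le_one) simp_all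
  thus ?thesis
    by (simp add: add_increasing2)
qed

lemma norm_le_linear_plus_square:
  fixes q :: "complex \<Rightarrow> complex \<Rightarrow> complex"
  assumes b00: "b 0 0 = 0" and b01: "b 0 1 = 0" and \<rho>: "\<rho> \<le> 1"
    and q: "\<And>z w. norm z < \<rho> \<Longrightarrow> norm w < \<rho> \<Longrightarrow>
       norm (q z w) \<le> K * (\<Sum>k\<in>{k\<in>{1..s}. b (nv k) (mv k) \<noteq> 0}. norm z ^ nv k * norm w ^ mv k)"
    and K: "0 < K"
  obtains K1 where "0 < K1"
    "\<And>z w. norm z < \<rho> \<Longrightarrow> norm w < \<rho> \<Longrightarrow> norm (q z w) \<le> K1 * (norm z + (norm w)\<^sup>2)"
proof
  define V where "V = {k\<in>{1..s}. b (nv k) (mv k) \<noteq> 0}"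
  show "0 < K * (card V + 1)"
    using K by simp
  fix z w :: complex assume z: "norm z < \<rho>" and w: "norm w < \<rho>"
  have "(nv k, mv k) \<notin> {(0, 0), (0, 1)}" if "k \<in> V" for k
  proof -
    have "b (nv k) (mv k) \<noteq> 0"
      using that by (simp add: V_def)
    thus ?thesis
      by (metis b00 b01 empty_iff insert_iff prod.inject)
  qed
  hence "norm z ^ nv k * norm w ^ mv k \<le> norm z + (norm w)\<^sup>2" if "k \<in> V" for k
    using z w \<rho> that by (intro monomial_le_linear_plus_square) simp_all
  hence "(\<Sum>k\<in>V. norm z ^ nv k * norm w ^ mv k) \<le> card V * (norm z + (norm w)\<^sup>2)"
    using sum_mono[of V "\<lambda>k. norm z ^ nv k * norm w ^ mv k" "\<lambda>_. norm z + (norm w)\<^sup>2"] by simp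
  also have "\<dots> \<le> (card V + 1) * (norm z + (norm w)\<^sup>2)"
    by (simp add: mult_right_mono)
  finally show "norm (q z w) \<le> K * (card V + 1) * (norm z + (norm w)\<^sup>2)"
    using q[OF z w] K unfolding V_def by (smt (verit) mult.assoc mult_left_mono)
qed

lemma norm_near_monomial_bounds:
  fixes u a z :: complex
  assumes err: "norm (u - a * z ^ \<delta>) \<le> norm a / 2 * norm z ^ \<delta>"
    and z: "norm z \<le> 1" "3 * norm a * norm z \<le> 1" and \<delta>: "2 \<le> \<delta>"
  shows "norm u \<le> norm z / 2" "norm a / 2 * norm z ^ \<delta> \<le> norm u"
proof -
  have main: "norm (a * z ^ \<delta>) = norm a * norm z ^ \<delta>"
    by (simp add: norm_mult norm_power)
  have "norm u \<le> 3 / 2 * norm a * norm z ^ \<delta>"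
    using norm_triangle_ineq[of "u - a * z ^ \<delta>" "a * z ^ \<delta>"] err main by simp
  also have "\<dots> \<le> 3 / 2 * norm a * (norm z * norm z)"
    using z(1) \<delta> by (intro mult_left_mono) (auto simp flip: power2_eq_square intro: power_decreasing)
  also have "\<dots> = (3 * norm a * norm z) * norm z / 2"
    by (simp add: algebra_simps)
  also have "\<dots> \<le> 1 * norm z / 2"
    using z(2) by (intro divide_right_mono mult_right_mono) simp_all
  finally show "norm u \<le> norm z / 2"
    by simp
  show "norm a / 2 * norm z ^ \<delta> \<le> norm u"
    using norm_triangle_ineq2[of "a * z ^ \<delta>" u] err main by (simp add: norm_minus_commute)
qed

lemma superattracting_estimates:
  fixes p :: "complex \<Rightarrow> complex" and a :: complex
  assumes a: "a \<noteq> 0" and \<delta>: "2 \<le> \<delta>"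
    and p: "\<exists>C \<epsilon>. 0 < \<epsilon> \<and> (\<forall>z. norm z < \<epsilon> \<longrightarrow> z \<in> Dz \<and> norm (p z - a * z ^ \<delta>) \<le> C * norm z ^ (\<delta> + 1))"
  obtains \<epsilon>1 where "0 < \<epsilon>1" "\<And>z. norm z < \<epsilon>1 \<Longrightarrow> z \<in> Dz"
    "\<And>z. norm z < \<epsilon>1 \<Longrightarrow> norm (p z) \<le> norm z / 2"
    "\<And>z. norm z < \<epsilon>1 \<Longrightarrow> norm a / 2 * norm z ^ \<delta> \<le> norm (p z)"
    "\<And>z. norm z < \<epsilon>1 \<Longrightarrow> z \<noteq> 0 \<Longrightarrow> p z \<noteq> 0"
proof -
  obtain C \<epsilon> where \<epsilon>: "0 < \<epsilon>"
    and p_near: "\<And>z. norm z < \<epsilon> \<Longrightarrow> z \<in> Dz \<and> norm (p z - a * z ^ \<delta>) \<le> C * norm z ^ (\<delta> + 1)"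
    using p by blast
  define \<epsilon>1 where "\<epsilon>1 = Min {\<epsilon>, 1, 1 / (3 * norm a), norm a / (2 * (\<bar>C\<bar> + 1))}"
  have "0 < \<epsilon>1"
    using a \<epsilon> by (simp add: \<epsilon>1_def add_pos_nonneg)
  moreover
  have bounds: "z \<in> Dz \<and> norm (p z) \<le> norm z / 2 \<and> norm a / 2 * norm z ^ \<delta> \<le> norm (p z)"
    if z: "norm z < \<epsilon>1" for z
  proof -
    have z_lt: "norm z < \<epsilon>" "norm z < 1" "norm z < 1 / (3 * norm a)" "norm z < norm a / (2 * (\<bar>C\<bar> + 1))"
      using z by (simp_all add: \<epsilon>1_def)
    have "norm (p z - a * z ^ \<delta>) \<le> \<bar>C\<bar> * norm z * norm z ^ \<delta>"
      using p_near[OF z_lt(1)] abs_ge_self[of C]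
      by (smt (verit) mult_right_mono power_Suc zero_le_power norm_ge_zero Suc_eq_plus1 mult.assoc)
    also have "\<dots> \<le> norm a / 2 * norm z ^ \<delta>"
    proof (rule mult_right_mono)
      have "\<bar>C\<bar> * norm z \<le> (\<bar>C\<bar> + 1) * norm z"
        by (simp add: mult_right_mono)
      also have "\<dots> \<le> norm a / 2"
        using z_lt(4) by (simp add: field_simps)
      finally show "\<bar>C\<bar> * norm z \<le> norm a / 2" .
    qed simp
    finally have "norm (p z - a * z ^ \<delta>) \<le> norm a / 2 * norm z ^ \<delta>" .
    moreover have "3 * norm a * norm z \<le> 1"
      using z_lt(3) a by (simp add: field_simps)
    ultimately show ?thesis
      using norm_near_monomial_bounds[of "p z" a z \<delta>] p_near[OF z_lt(1)] z_lt(2) \<delta> by simp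
  qed
  moreover have "p z \<noteq> 0" if "norm z < \<epsilon>1" "z \<noteq> 0" for z
  proof -
    have "0 < norm a / 2 * norm z ^ \<delta>"
      using a that(2) by simp
    thus ?thesis
      using bounds[OF that(1)] by auto
  qed
  ultimately show thesis
    by (intro that) auto
qed

lemma mem_basin_diff_Ez_iff:
  "x \<in> basin D F x0 - Ez D F \<longleftrightarrow>
     (\<forall>n. (F ^^ n) x \<in> D \<and> fst ((F ^^ n) x) \<noteq> 0) \<and> (\<lambda>n. (F ^^ n) x) \<longlonglongrightarrow> x0"
  unfolding basin_def Ez_def preim_def by (auto, metis funpow_0)

lemma preim_subset_basin_diff_Ez:
  assumes invariant: "\<And>x. fst x = 0 \<Longrightarrow> fst (F x) = 0"
    and U_sub: "U \<subseteq> basin D F x0 - Ez D F"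
  shows "preim D F n U \<subseteq> basin D F x0 - Ez D F"
proof
  fix x assume "x \<in> preim D F n U"
  hence pre: "\<forall>k<n. (F ^^ k) x \<in> D" and "(F ^^ n) x \<in> basin D F x0 - Ez D F"
    using U_sub by (auto simp: preim_def)
  hence y: "\<forall>m. (F ^^ m) ((F ^^ n) x) \<in> D \<and> fst ((F ^^ m) ((F ^^ n) x)) \<noteq> 0"
    "(\<lambda>m. (F ^^ m) ((F ^^ n) x)) \<longlonglongrightarrow> x0"
    unfolding mem_basin_diff_Ez_iff by blast+
  have "fst ((F ^^ k) x) \<noteq> 0" if "k < n" for k
  proof
    assume "fst ((F ^^ k) x) = 0"
    hence "fst ((F ^^ m) ((F ^^ k) x)) = 0" for m
      by (induction m) (simp_all add: invariant)
    hence "fst ((F ^^ n) x) = 0"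
      using that funpow_add[of "n - k" k F] by simp
    thus False
      using y(1)[rule_format, of 0] by simp
  qed
  moreover have "(F ^^ k) x \<in> D \<and> fst ((F ^^ k) x) \<noteq> 0" if "n \<le> k" for k
    using y(1)[rule_format, of "k - n"] that funpow_add[of "k - n" n F] by simp
  ultimately have "(F ^^ k) x \<in> D \<and> fst ((F ^^ k) x) \<noteq> 0" for k
    using pre by (cases "k < n") auto
  moreover have "(\<lambda>k. (F ^^ (k + n)) x) \<longlonglongrightarrow> x0"
    using y(2) by (simp add: funpow_add)
  hence "(\<lambda>k. (F ^^ k) x) \<longlonglongrightarrow> x0"
    by (rule LIMSEQ_offset)
  ultimately show "x \<in> basin D F x0 - Ez D F"
    unfolding mem_basin_diff_Ez_iff by blast
qed

lemma Union_preim_eq_basin_diff_Ez: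
  assumes invariant: "\<And>x. fst x = 0 \<Longrightarrow> fst (F x) = 0"
    and U_sub: "U \<subseteq> basin D F x0 - Ez D F"
    and enters: "\<And>x. x \<in> basin D F x0 - Ez D F \<Longrightarrow> \<exists>n. (F ^^ n) x \<in> U"
  shows "(\<Union>n. preim D F n U) = basin D F x0 - Ez D F"
proof (intro equalityI subsetI)
  fix x assume "x \<in> (\<Union>n. preim D F n U)"
  thus "x \<in> basin D F x0 - Ez D F"
    using preim_subset_basin_diff_Ez[OF invariant U_sub] by blast
next
  fix x assume x: "x \<in> basin D F x0 - Ez D F"
  then obtain n where "(F ^^ n) x \<in> U"
    using enters by blast
  moreover have "\<forall>k. (F ^^ k) x \<in> D"
    using x unfolding mem_basin_diff_Ez_iff by blast
  moreover from this have "x \<in> D"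
    by (metis funpow_0)
  ultimately have "x \<in> preim D F n U"
    by (simp add: preim_def)
  thus "x \<in> (\<Union>n. preim D F n U)"
    by blast
qed

lemma fst_skew [simp]: "fst (skew p q x) = p (fst x)"
  and snd_skew [simp]: "snd (skew p q x) = q (fst x) (snd x)"
  by (simp_all add: skew_def split_beta)

lemma bidisk_orbit_decay:
  fixes Z W :: "nat \<Rightarrow> complex" and K \<eta> :: real
  assumes Z_step: "\<And>n. Z (Suc n) = p (Z n)" and W_step: "\<And>n. W (Suc n) = q (Z n) (W n)"
    and p: "\<And>z. norm z < \<eta> \<Longrightarrow> norm (p z) \<le> norm z / 2 \<and> (z \<noteq> 0 \<longrightarrow> p z \<noteq> 0)"
    and q: "\<And>z w. norm z < \<eta> \<Longrightarrow> norm w < \<eta> \<Longrightarrow> norm (q z w) \<le> K * (norm z + (norm w)\<^sup>2)"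
    and K: "0 < K" "K * \<eta> \<le> 1 / 2"
    and start: "Z 0 \<noteq> 0" "norm (Z 0) < \<eta>" "norm (W 0) + 4 * K * norm (Z 0) < \<eta>"
  shows "Z n \<noteq> 0 \<and> norm (Z n) \<le> (1/2) ^ n * norm (Z 0)
    \<and> norm (W n) + 4 * K * norm (Z n) \<le> (3/4) ^ n * (norm (W 0) + 4 * K * norm (Z 0))"
proof (induction n)
  case 0
  thus ?case
    using start by simp
next
  case (Suc n)
  \<comment> \<open>\<open>norm w + 4 K norm z\<close> is a Lyapunov function: it shrinks by the factor \<open>3/4\<close> at each step\<close>
  define V0 where "V0 = norm (W 0) + 4 * K * norm (Z 0)"
  have IH: "Z n \<noteq> 0" "norm (Z n) \<le> (1/2) ^ n * norm (Z 0)" "norm (W n) + 4 * K * norm (Z n) \<le> (3/4) ^ n * V0"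
    using Suc by (simp_all add: V0_def)
  have "(1/2) ^ n * norm (Z 0) \<le> norm (Z 0)"
    by (simp add: mult_left_le_one_le power_le_one)
  hence "norm (Z n) < \<eta>"
    using IH(2) start(2) by linarith
  have "(3/4) ^ n * V0 \<le> V0"
    using K by (simp add: mult_left_le_one_le power_le_one V0_def)
  moreover have "0 \<le> 4 * K * norm (Z n)"
    using K by simp
  ultimately have "norm (W n) < \<eta>"
    using IH(3) start(3) by (simp add: V0_def)
  have pZ: "norm (p (Z n)) \<le> norm (Z n) / 2" "p (Z n) \<noteq> 0"
    using p[OF \<open>norm (Z n) < \<eta>\<close>] IH(1) by auto
  have "K * norm (W n) \<le> 1/2"
    using mult_left_mono[OF less_imp_le[OF \<open>norm (W n) < \<eta>\<close>], of K] K by linarith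
  hence "K * norm (W n) * norm (W n) \<le> 1/2 * norm (W n)"
    using K by (intro mult_right_mono) simp_all
  moreover have "norm (q (Z n) (W n)) \<le> K * norm (Z n) + K * norm (W n) * norm (W n)"
    using q[OF \<open>norm (Z n) < \<eta>\<close> \<open>norm (W n) < \<eta>\<close>] by (simp add: power2_eq_square distrib_left mult.assoc)
  moreover have "K * norm (p (Z n)) \<le> 1/2 * (K * norm (Z n))"
    using mult_left_mono[OF pZ(1), of K] K by simp
  ultimately have "norm (q (Z n) (W n)) + 4 * (K * norm (p (Z n))) \<le> 3/4 * norm (W n) + 3 * (K * norm (Z n))"
    using norm_ge_zero[of "W n"] by linarith
  hence "norm (W (Suc n)) + 4 * K * norm (Z (Suc n)) \<le> 3/4 * (norm (W n) + 4 * K * norm (Z n))"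
    by (simp add: Z_step W_step algebra_simps)
  also have "\<dots> \<le> 3/4 * ((3/4) ^ n * V0)"
    using IH(3) by simp
  finally show ?case
    using pZ IH(2) by (simp add: Z_step V0_def)
qed

lemma tendsto_zero_of_le_geometric:
  fixes X :: "nat \<Rightarrow> 'a::real_normed_vector"
  assumes "\<And>n. norm (X n) \<le> c ^ n * C" "0 \<le> c" "c < 1"
  shows "X \<longlonglongrightarrow> 0"
  by (rule Lim_null_comparison[OF always_eventually[OF allI[OF assms(1)]]])
    (intro tendsto_mult_left_zero LIMSEQ_power_zero; use assms in simp)

lemma punctured_bidisk_subset_basin_diff_Ez:
  fixes p :: "complex \<Rightarrow> complex" and q :: "complex \<Rightarrow> complex \<Rightarrow> complex"
  assumes \<epsilon>: "0 < \<epsilon>"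
    and p_dom: "\<And>z. norm z < \<epsilon> \<Longrightarrow> z \<in> Dz"
    and p_upper: "\<And>z. norm z < \<epsilon> \<Longrightarrow> norm (p z) \<le> norm z / 2"
    and p_nz: "\<And>z. norm z < \<epsilon> \<Longrightarrow> z \<noteq> 0 \<Longrightarrow> p z \<noteq> 0"
    and \<rho>: "0 < \<rho>" and K: "0 < K"
    and q: "\<And>z w. norm z < \<rho> \<Longrightarrow> norm w < \<rho> \<Longrightarrow> norm (q z w) \<le> K * (norm z + (norm w)\<^sup>2)"
  obtains \<eta> where "0 < \<eta>"
    "\<And>z w. norm z < \<eta> \<Longrightarrow> norm w < \<eta> \<Longrightarrow> z \<noteq> 0 \<Longrightarrow>
       (z, w) \<in> basin (Dz \<times> UNIV) (skew p q) (0, 0) - Ez (Dz \<times> UNIV) (skew p q)"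
proof
  define \<eta>0 where "\<eta>0 = Min {\<epsilon>, \<rho>, 1 / (2 * K)}"
  have \<eta>0: "0 < \<eta>0" "\<eta>0 \<le> \<epsilon>" "\<eta>0 \<le> \<rho>" "K * \<eta>0 \<le> 1 / 2"
    using \<epsilon> \<rho> K mult_left_mono[of \<eta>0 "1 / (2 * K)" K] by (auto simp: \<eta>0_def)
  define \<eta> where "\<eta> = \<eta>0 / (1 + 4 * K)"
  show "0 < \<eta>"
    using \<eta>0 K by (simp add: \<eta>_def)
  have "\<eta> + 4 * K * \<eta> = (1 + 4 * K) * \<eta>"
    by (simp add: algebra_simps)
  also have "\<dots> = \<eta>0"
    using K by (simp add: \<eta>_def)
  finally have "\<eta> + 4 * K * \<eta> = \<eta>0" .
  fix z w :: complex assume z: "norm z < \<eta>" and w: "norm w < \<eta>" and "z \<noteq> 0"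
  define Z where "Z n = fst ((skew p q ^^ n) (z, w))" for n
  define W where "W n = snd ((skew p q ^^ n) (z, w))" for n
  have "\<eta> \<le> \<eta>0"
    using \<open>\<eta> + 4 * K * \<eta> = \<eta>0\<close> \<open>0 < \<eta>\<close> K by (smt (verit) mult_pos_pos)
  have "4 * K * norm z < 4 * K * \<eta>"
    using z K by simp
  hence start: "norm z < \<eta>0" "norm w + 4 * K * norm z < \<eta>0"
    using z w \<open>\<eta> + 4 * K * \<eta> = \<eta>0\<close> \<open>\<eta> \<le> \<eta>0\<close> by linarith+
  have Z_step: "Z (Suc n) = p (Z n)" and W_step: "W (Suc n) = q (Z n) (W n)" for n
    by (simp_all add: Z_def W_def)
  have p': "norm (p z) \<le> norm z / 2 \<and> (z \<noteq> 0 \<longrightarrow> p z \<noteq> 0)" if "norm z < \<eta>0" for z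
    using p_upper[of z] p_nz[of z] that \<eta>0 by simp
  have q': "norm (q z w) \<le> K * (norm z + (norm w)\<^sup>2)" if "norm z < \<eta>0" "norm w < \<eta>0" for z w
    using q[of z w] that \<eta>0 by simp
  have Z0: "Z 0 = z" and W0: "W 0 = w"
    by (simp_all add: Z_def W_def)
  have decay: "Z n \<noteq> 0 \<and> norm (Z n) \<le> (1/2) ^ n * norm z
      \<and> norm (W n) + 4 * K * norm (Z n) \<le> (3/4) ^ n * (norm w + 4 * K * norm z)" for n
    using bidisk_orbit_decay[of Z p W q \<eta>0 K n, OF Z_step W_step p' q' K \<eta>0(4)] start \<open>z \<noteq> 0\<close>
    by (simp add: Z0 W0)
  have "Z n \<in> Dz" for n
  proof -
    have "(1/2) ^ n * norm z \<le> norm z"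
      by (simp add: mult_left_le_one_le power_le_one)
    thus ?thesis
      using p_dom[of "Z n"] decay[of n] start \<eta>0 by force
  qed
  moreover have "Z \<longlonglongrightarrow> 0"
    using decay by (intro tendsto_zero_of_le_geometric[of _ "1/2" "norm z"]) auto
  moreover have "W \<longlonglongrightarrow> 0"
  proof (rule tendsto_zero_of_le_geometric[of _ "3/4" "norm w + 4 * K * norm z"])
    show "norm (W n) \<le> (3/4) ^ n * (norm w + 4 * K * norm z)" for n
      using decay[of n] K by (smt (verit) mult_nonneg_nonneg norm_ge_zero)
  qed simp_all
  ultimately show "(z, w) \<in> basin (Dz \<times> UNIV) (skew p q) (0, 0) - Ez (Dz \<times> UNIV) (skew p q)"
    unfolding mem_basin_diff_Ez_iff using decay tendsto_Pair[of Z 0 _ W 0]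
    by (auto simp: Z_def W_def mem_Times_iff)
qed

lemma Ulp_subset_punctured_bidisk:
  assumes "0 < l" "r \<le> 1"
  shows "Ulp r l \<subseteq> {(z, w). z \<noteq> 0 \<and> norm z < r \<and> norm w < r}"
proof
  fix x assume "x \<in> Ulp r l"
  then obtain z w where x: "x = (z, w)" and zw: "norm z < r" "norm w < r * norm z powr l"
    by (auto simp: Ulp_def)
  have "z \<noteq> 0"
    using zw(2) by auto
  have "norm z powr l \<le> 1"
    using zw(1) assms by (intro powr_le1) auto
  moreover have "0 \<le> r"
    using zw(1) norm_ge_zero[of z] by linarith
  ultimately have "r * norm z powr l \<le> r"
    by (rule mult_left_le)
  thus "x \<in> {(z, w). z \<noteq> 0 \<and> norm z < r \<and> norm w < r}"
    using x zw \<open>z \<noteq> 0\<close> by simp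
qed

lemma eventually_absorb_constant_ge:
  fixes B :: "nat \<Rightarrow> real"
  assumes B: "filterlim B at_top sequentially"
    and step: "eventually (\<lambda>n. \<delta>' * B n - c \<le> B (Suc n)) sequentially" and d: "d < \<delta>'"
  shows "eventually (\<lambda>n. d * B n \<le> B (Suc n)) sequentially"
proof -
  have "eventually (\<lambda>n. c / (\<delta>' - d) \<le> B n) sequentially"
    using B unfolding filterlim_at_top by blast
  with step show ?thesis
  proof eventually_elim
    case (elim n)
    hence "c \<le> (\<delta>' - d) * B n"
      using d by (simp add: pos_divide_le_eq mult.commute)
    thus ?case
      using elim by (simp add: algebra_simps)
  qed
qed

lemma eventually_absorb_constant_le:
  fixes A :: "nat \<Rightarrow> real"
  assumes A: "filterlim A at_top sequentially"
    and step: "eventually (\<lambda>n. A (Suc n) \<le> \<delta> * A n + c) sequentially" and d: "\<delta> < d"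
  shows "eventually (\<lambda>n. A (Suc n) \<le> d * A n) sequentially"
proof -
  have "eventually (\<lambda>n. c / (d - \<delta>) \<le> A n) sequentially"
    using A unfolding filterlim_at_top by blast
  with step show ?thesis
  proof eventually_elim
    case (elim n)
    hence "c \<le> (d - \<delta>) * A n"
      using d by (simp add: pos_divide_le_eq mult.commute)
    thus ?case
      using elim by (simp add: algebra_simps)
  qed
qed

lemma geometric_lower_bound:
  fixes B :: "nat \<Rightarrow> real"
  assumes "\<And>n. N \<le> n \<Longrightarrow> d * B n \<le> B (Suc n)" "0 \<le> d"
  shows "d ^ m * B N \<le> B (N + m)"
proof (induction m)
  case (Suc m)
  have "d ^ Suc m * B N \<le> d * B (N + m)"
    using Suc assms(2) by (simp add: mult.assoc mult_left_mono)
  also have "\<dots> \<le> B (N + Suc m)"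
    using assms(1)[of "N + m"] by simp
  finally show ?case .
qed simp

lemma geometric_upper_bound:
  fixes A :: "nat \<Rightarrow> real"
  assumes "\<And>n. N \<le> n \<Longrightarrow> A (Suc n) \<le> d * A n" "0 \<le> d"
  shows "A (N + m) \<le> d ^ m * A N"
proof (induction m)
  case (Suc m)
  have "A (N + Suc m) \<le> d * A (N + m)"
    using assms(1)[of "N + m"] by simp
  also have "\<dots> \<le> d ^ Suc m * A N"
    using Suc assms(2) by (simp add: mult.assoc mult_left_mono)
  finally show ?case .
qed simp

lemma faster_growth_not_dominated:
  fixes A B :: "nat \<Rightarrow> real"
  assumes \<delta>: "0 < \<delta>" "\<delta> < \<delta>'" and l: "0 \<le> l"
    and A: "filterlim A at_top sequentially" and B: "filterlim B at_top sequentially"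
    and A_step: "eventually (\<lambda>n. A (Suc n) \<le> \<delta> * A n + cA) sequentially"
    and B_step: "eventually (\<lambda>n. \<delta>' * B n - cB \<le> B (Suc n)) sequentially"
    and B_le_A: "eventually (\<lambda>n. B n \<le> l * A n + cAB) sequentially"
  shows False
proof -
  define d1 where "d1 = (\<delta> + 2 * \<delta>') / 3"
  define d2 where "d2 = (2 * \<delta> + \<delta>') / 3"
  have d: "\<delta> < d2" "d2 < d1" "d1 < \<delta>'" "0 < d2"
    using \<delta> by (simp_all add: d1_def d2_def)
  have "eventually (\<lambda>n. cAB \<le> A n) sequentially" "eventually (\<lambda>n. 1 \<le> B n) sequentially"
    using A B unfolding filterlim_at_top by blast+
  with eventually_absorb_constant_ge[OF B B_step d(3)] eventually_absorb_constant_le[OF A A_step d(1)] B_le_A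
  have "eventually (\<lambda>n. d1 * B n \<le> B (Suc n) \<and> A (Suc n) \<le> d2 * A n \<and> B n \<le> (l + 1) * A n \<and> 1 \<le> B n)
    sequentially"
    by eventually_elim (simp add: algebra_simps)
  then obtain N where N: "\<And>n. N \<le> n \<Longrightarrow>
      d1 * B n \<le> B (Suc n) \<and> A (Suc n) \<le> d2 * A n \<and> B n \<le> (l + 1) * A n \<and> 1 \<le> B n"
    unfolding eventually_sequentially by blast
  have "d1 ^ m * B N \<le> (l + 1) * (d2 ^ m * A N)" for m
  proof -
    have "d1 ^ m * B N \<le> B (N + m)"
      using N d by (intro geometric_lower_bound) auto
    also have "\<dots> \<le> (l + 1) * A (N + m)"
      using N[of "N + m"] by simp
    also have "\<dots> \<le> (l + 1) * (d2 ^ m * A N)"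
      using N d l by (intro mult_left_mono geometric_upper_bound) auto
    finally show ?thesis .
  qed
  hence "(d1 / d2) ^ m \<le> (l + 1) * A N / B N" for m
    using d N[of N] by (simp add: power_divide pos_le_divide_eq field_simps)
  moreover obtain m where "(l + 1) * A N / B N < (d1 / d2) ^ m"
    using d real_arch_pow[of "d1 / d2" "(l + 1) * A N / B N"] by auto
  ultimately show False
    by (meson not_le)
qed

lemma uminus_ln_le_of_mult_powr_le:
  fixes x y c a :: real
  assumes "0 < c" "0 < x" "c * x powr a \<le> y"
  shows "- ln y \<le> a * - ln x + - ln c"
proof -
  have "0 < c * x powr a"
    using assms by simp
  hence "ln (c * x powr a) \<le> ln y"
    using assms(3) by (subst ln_le_cancel_iff) auto
  thus ?thesis
    using assms by (simp add: ln_mult_pos)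
qed

lemma uminus_ln_ge_of_le_mult_powr:
  fixes x y C a :: real
  assumes "0 < y" "0 < x" "y \<le> C * x powr a"
  shows "a * - ln x - ln C \<le> - ln y"
proof -
  have "0 < C"
    using assms by (smt (verit) mult_nonpos_nonneg powr_ge_zero)
  have "ln y \<le> ln (C * x powr a)"
    using assms \<open>0 < C\<close> by (subst ln_le_cancel_iff) auto
  thus ?thesis
    using assms \<open>0 < C\<close> by (simp add: ln_mult_pos)
qed

lemma filterlim_uminus_ln_at_top:
  fixes x :: "nat \<Rightarrow> real"
  assumes "x \<longlonglongrightarrow> 0" "eventually (\<lambda>n. 0 < x n) sequentially"
  shows "filterlim (\<lambda>n. - ln (x n)) at_top sequentially"
  unfolding filterlim_at_top
proof
  fix M :: real
  have "eventually (\<lambda>n. dist (x n) 0 < exp (- M) \<and> 0 < x n) sequentially"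
    using tendstoD[OF assms(1), of "exp (- M)"] assms(2) by (auto intro: eventually_conj)
  thus "eventually (\<lambda>n. M \<le> - ln (x n)) sequentially"
  proof (rule eventually_mono)
    fix n assume "dist (x n) 0 < exp (- M) \<and> 0 < x n"
    hence "ln (x n) < - M"
      by (metis dist_real_def diff_zero abs_of_pos ln_exp ln_less_cancel_iff exp_gt_zero)
    thus "M \<le> - ln (x n)"
      by simp
  qed
qed

lemma power_growth_not_dominated:
  fixes z w :: "nat \<Rightarrow> real" and \<delta> \<delta>' l c C r :: real
  assumes lim: "z \<longlonglongrightarrow> 0" "w \<longlonglongrightarrow> 0" and pos: "eventually (\<lambda>n. 0 < z n \<and> 0 < w n) sequentially"
    and \<delta>: "0 < \<delta>" "\<delta> < \<delta>'" and l: "0 \<le> l" and c: "0 < c" and r: "0 < r"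
    and z_step: "eventually (\<lambda>n. c * z n powr \<delta> \<le> z (Suc n)) sequentially"
    and w_step: "eventually (\<lambda>n. w (Suc n) \<le> C * w n powr \<delta>') sequentially"
    and w_ge: "eventually (\<lambda>n. r * z n powr l \<le> w n) sequentially"
  shows False
proof (rule faster_growth_not_dominated[where A = "\<lambda>n. - ln (z n)" and B = "\<lambda>n. - ln (w n)"
      and cA = "- ln c" and cB = "ln C" and cAB = "- ln r", OF \<delta> l])
  show "filterlim (\<lambda>n. - ln (z n)) at_top sequentially" "filterlim (\<lambda>n. - ln (w n)) at_top sequentially"
    using pos by (auto intro!: filterlim_uminus_ln_at_top lim elim: eventually_mono)
  show "eventually (\<lambda>n. - ln (z (Suc n)) \<le> \<delta> * - ln (z n) + - ln c) sequentially"
    using z_step pos by eventually_elim (rule uminus_ln_le_of_mult_powr_le[OF c], auto)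
  have "eventually (\<lambda>n. 0 < w (Suc n)) sequentially"
    using pos unfolding eventually_sequentially_Suc[of "\<lambda>n. 0 < w n"] by (auto elim: eventually_mono)
  thus "eventually (\<lambda>n. \<delta>' * - ln (w n) - ln C \<le> - ln (w (Suc n))) sequentially"
    using w_step pos by eventually_elim (rule uminus_ln_ge_of_le_mult_powr, auto)
  show "eventually (\<lambda>n. - ln (w n) \<le> l * - ln (z n) + - ln r) sequentially"
    using w_ge pos by eventually_elim (rule uminus_ln_le_of_mult_powr_le[OF r], auto)
qed

lemma vertex_monomials_le_outside_cusp:
  fixes z w r l \<delta>' :: real and nv mv :: "'a \<Rightarrow> nat"
  assumes z: "0 < z" and w: "0 < w" "w < 1" and r: "0 < r" and l: "0 < l"
    and outside: "r * z powr l \<le> w" and \<delta>': "\<And>k. k \<in> V \<Longrightarrow> \<delta>' \<le> nv k / l + mv k"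
  shows "(\<Sum>k\<in>V. z ^ nv k * w ^ mv k) \<le> (\<Sum>k\<in>V. r powr (- real (nv k) / l)) * w powr \<delta>'"
  unfolding sum_distrib_right
proof (rule sum_mono)
  fix k assume k: "k \<in> V"
  have "z = (z powr l) powr (1 / l)"
    using z l by (simp add: powr_powr)
  also have "\<dots> \<le> (w / r) powr (1 / l)"
    using outside z r l by (intro powr_mono2) (simp_all add: field_simps)
  finally have "z ^ nv k \<le> ((w / r) powr (1 / l)) ^ nv k"
    using z by (intro power_mono) simp_all
  also have "\<dots> = (w / r) powr (nv k / l)"
    using w r by (simp add: powr_realpow[symmetric] powr_powr)
  also have "\<dots> = r powr (- real (nv k) / l) * w powr (nv k / l)"
    using w r by (simp add: powr_divide powr_minus_divide minus_divide_left[symmetric])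
  finally have "z ^ nv k * w ^ mv k \<le> r powr (- real (nv k) / l) * (w powr (nv k / l) * w powr mv k)"
    using w by (simp add: powr_realpow mult.assoc mult_right_mono)
  also have "\<dots> = r powr (- real (nv k) / l) * w powr (nv k / l + mv k)"
    by (simp add: powr_add)
  also have "\<dots> \<le> r powr (- real (nv k) / l) * w powr \<delta>'"
    using w \<delta>'[OF k] by (intro mult_left_mono powr_mono') simp_all
  finally show "z ^ nv k * w ^ mv k \<le> r powr (- real (nv k) / l) * w powr \<delta>'" .
qed

lemma skew_orbit_enters_cusp:
  fixes p :: "complex \<Rightarrow> complex" and q :: "complex \<Rightarrow> complex \<Rightarrow> complex"
    and nv mv :: "'a \<Rightarrow> nat" and c \<epsilon> \<rho> K r l :: real and \<delta> :: nat
  assumes x: "x \<in> basin (D \<times> UNIV) (skew p q) (0, 0) - Ez (D \<times> UNIV) (skew p q)"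
    and c: "0 < c" and \<epsilon>: "0 < \<epsilon>" and p_lower: "\<And>z. norm z < \<epsilon> \<Longrightarrow> c * norm z ^ \<delta> \<le> norm (p z)"
    and \<rho>: "0 < \<rho>" "\<rho> \<le> 1" and K: "0 < K"
    and q_upper: "\<And>z w. norm z < \<rho> \<Longrightarrow> norm w < \<rho> \<Longrightarrow>
                    norm (q z w) \<le> K * (\<Sum>k\<in>V. norm z ^ nv k * norm w ^ mv k)"
    and V: "finite V" "\<And>k. k \<in> V \<Longrightarrow> real \<delta> < nv k / l + mv k"
    and \<delta>: "0 < \<delta>" and r: "0 < r" and l: "0 < l"
  shows "\<exists>n. (skew p q ^^ n) x \<in> Ulp r l"
proof (rule ccontr)
  assume outside: "\<nexists>n. (skew p q ^^ n) x \<in> Ulp r l"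
  define Z where "Z = (\<lambda>n. fst ((skew p q ^^ n) x))"
  define W where "W = (\<lambda>n. snd ((skew p q ^^ n) x))"
  have orbit: "\<forall>n. Z n \<noteq> 0" "(\<lambda>n. (skew p q ^^ n) x) \<longlonglongrightarrow> (0, 0)"
    using x unfolding mem_basin_diff_Ez_iff Z_def by blast+
  have "Z \<longlonglongrightarrow> 0" "W \<longlonglongrightarrow> 0"
    using tendsto_fst[OF orbit(2)] tendsto_snd[OF orbit(2)] by (simp_all add: Z_def W_def)
  from eventually_conj[OF tendstoD[OF this(1), of "min \<epsilon> (min \<rho> r)"] tendstoD[OF this(2) \<rho>(1)]]
  obtain N where "\<forall>n\<ge>N. dist (Z n) 0 < min \<epsilon> (min \<rho> r) \<and> dist (W n) 0 < \<rho>"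
    using \<epsilon> \<rho> r by (auto simp: eventually_sequentially)
  hence N: "norm (Z n) < \<epsilon>" "norm (Z n) < \<rho>" "norm (Z n) < r" "norm (W n) < \<rho>" if "N \<le> n" for n
    using that by simp_all
  have W_ge: "r * norm (Z n) powr l \<le> norm (W n)" if "N \<le> n" for n
  proof -
    have "(Z n, W n) \<notin> Ulp r l"
      using outside by (simp add: Z_def W_def)
    thus ?thesis
      using N(3)[OF that] by (simp add: Ulp_def not_less)
  qed
  have W_pos: "0 < norm (W n)" if "N \<le> n" for n
    using W_ge[OF that] orbit(1) r by (smt (verit) powr_gt_zero zero_less_mult_iff zero_less_norm_iff)
  \<comment> \<open>outside the cusp every vertex monomial is at most a constant times \<open>norm w powr \<delta>'\<close>\<close>
  define \<delta>' where "\<delta>' = Min (insert (real \<delta> + 1) ((\<lambda>k. nv k / l + mv k) ` V))"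
  have "real \<delta> < \<delta>'" and \<delta>'_le: "\<And>k. k \<in> V \<Longrightarrow> \<delta>' \<le> nv k / l + mv k"
    using V by (simp_all add: \<delta>'_def)
  define S where "S = (\<Sum>k\<in>V. r powr (- real (nv k) / l))"
  have W_step: "norm (W (Suc n)) \<le> K * S * norm (W n) powr \<delta>'" if "N \<le> n" for n
  proof -
    have "norm (W (Suc n)) \<le> K * (\<Sum>k\<in>V. norm (Z n) ^ nv k * norm (W n) ^ mv k)"
      using q_upper N[OF that] by (simp add: Z_def W_def)
    also have "\<dots> \<le> K * (S * norm (W n) powr \<delta>')"
      unfolding S_def using orbit(1) N[OF that] \<rho> W_pos[OF that] r l W_ge[OF that] \<delta>'_le K
      by (intro mult_left_mono vertex_monomials_le_outside_cusp) auto
    finally show ?thesis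
      by (simp add: mult.assoc)
  qed
  show False
  proof (rule power_growth_not_dominated[where z = "\<lambda>n. norm (Z n)" and w = "\<lambda>n. norm (W n)"
        and \<delta> = "real \<delta>" and c = c and r = r and C = "K * S"])
    show "(\<lambda>n. norm (Z n)) \<longlonglongrightarrow> 0" "(\<lambda>n. norm (W n)) \<longlonglongrightarrow> 0"
      using \<open>Z \<longlonglongrightarrow> 0\<close> \<open>W \<longlonglongrightarrow> 0\<close> by (simp_all add: tendsto_norm_zero)
    show "eventually (\<lambda>n. 0 < norm (Z n) \<and> 0 < norm (W n)) sequentially"
      using orbit(1) W_pos by (intro eventually_sequentiallyI) auto
    show "eventually (\<lambda>n. c * norm (Z n) powr real \<delta> \<le> norm (Z (Suc n))) sequentially"
      using p_lower[OF N(1)] orbit(1) by (intro eventually_sequentiallyI) (auto simp: Z_def powr_realpow)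
    show "eventually (\<lambda>n. norm (W (Suc n)) \<le> K * S * norm (W n) powr \<delta>') sequentially"
      using W_step by (rule eventually_sequentiallyI)
    show "eventually (\<lambda>n. r * norm (Z n) powr l \<le> norm (W n)) sequentially"
      using W_ge by (rule eventually_sequentiallyI)
  qed (use \<delta> \<open>real \<delta> < \<delta>'\<close> l c r in simp_all)
qed

lemma Alp_eq_basin_diff_Ez:
  fixes p :: "complex \<Rightarrow> complex" and q :: "complex \<Rightarrow> complex \<Rightarrow> complex"
    and nv mv :: "'a \<Rightarrow> nat" and c \<epsilon> \<rho> K \<eta> r l :: real and \<delta> :: nat
  assumes p0: "p 0 = 0"
    and bidisk: "\<And>z w. norm z < \<eta> \<Longrightarrow> norm w < \<eta> \<Longrightarrow> z \<noteq> 0 \<Longrightarrow>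
       (z, w) \<in> basin (D \<times> UNIV) (skew p q) (0, 0) - Ez (D \<times> UNIV) (skew p q)"
    and c: "0 < c" and \<epsilon>: "0 < \<epsilon>" and p_lower: "\<And>z. norm z < \<epsilon> \<Longrightarrow> c * norm z ^ \<delta> \<le> norm (p z)"
    and \<rho>: "0 < \<rho>" "\<rho> \<le> 1" and K: "0 < K"
    and q_upper: "\<And>z w. norm z < \<rho> \<Longrightarrow> norm w < \<rho> \<Longrightarrow>
                    norm (q z w) \<le> K * (\<Sum>k\<in>V. norm z ^ nv k * norm w ^ mv k)"
    and V: "finite V" "\<And>k. k \<in> V \<Longrightarrow> real \<delta> < nv k / l + mv k"
    and \<delta>: "0 < \<delta>" and r: "0 < r" "r \<le> \<eta>" "r \<le> 1" and l: "0 < l"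
  shows "Alp (D \<times> UNIV) (skew p q) r l = basin (D \<times> UNIV) (skew p q) (0, 0) - Ez (D \<times> UNIV) (skew p q)"
  unfolding Alp_def
proof (rule Union_preim_eq_basin_diff_Ez)
  show "fst (skew p q x) = 0" if "fst x = 0" for x
    using that p0 by simp
  show "Ulp r l \<subseteq> basin (D \<times> UNIV) (skew p q) (0, 0) - Ez (D \<times> UNIV) (skew p q)"
    using Ulp_subset_punctured_bidisk[OF l r(3)] bidisk r by fastforce
  show "\<exists>n. (skew p q ^^ n) x \<in> Ulp r l"
    if "x \<in> basin (D \<times> UNIV) (skew p q) (0, 0) - Ez (D \<times> UNIV) (skew p q)" for x
    by (rule skew_orbit_enters_cusp[OF that c \<epsilon> p_lower \<rho> K q_upper V \<delta> r(1) l])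
qed

theorem theorem2p14:
  fixes p :: "complex \<Rightarrow> complex" and q :: "complex \<Rightarrow> complex \<Rightarrow> complex"
    and b :: "nat \<Rightarrow> nat \<Rightarrow> complex" and a :: complex and \<delta> :: nat
    and Dz :: "complex set"
    and s :: nat and nv mv :: "nat \<Rightarrow> nat" and k :: nat
  assumes dom: "Dz = UNIV \<or>
      (\<exists>R>0. Dz = ball 0 R \<and>
         compact (closure {z \<in> Dz. (\<forall>n. (p ^^ n) z \<in> Dz) \<and> (\<lambda>n. (p ^^ n) z) \<longlonglongrightarrow> 0})
       \<and> closure {z \<in> Dz. (\<forall>n. (p ^^ n) z \<in> Dz) \<and> (\<lambda>n. (p ^^ n) z) \<longlonglongrightarrow> 0} \<subseteq> ball 0 R)"
    and p_hol: "p holomorphic_on Dz"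
    and q_cont: "continuous_on (Dz \<times> UNIV) (\<lambda>(z,w). q z w)"
    and q_hol_w: "\<forall>z\<in>Dz. q z holomorphic_on UNIV"
    and q_hol_z: "\<forall>w. (\<lambda>z. q z w) holomorphic_on Dz"
    and a_nz: "a \<noteq> 0" and delta: "\<delta> \<ge> 2"
    and p_exp: "\<exists>C \<epsilon>. \<epsilon> > 0 \<and> (\<forall>z. norm z < \<epsilon> \<longrightarrow> z \<in> Dz \<and>
                   norm (p z - a * z ^ \<delta>) \<le> C * norm z ^ (\<delta> + 1))"
    and q_exp: "\<exists>\<rho>>0. \<forall>z w. norm z < \<rho> \<longrightarrow> norm w < \<rho> \<longrightarrow>
                   ((\<lambda>(i,j). b i j * z ^ i * w ^ j) has_sum q z w) UNIV"
    and b00: "b 0 0 = 0" and b01: "b 0 1 = 0"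
    and verts: "newton_vertices b s nv mv"
    and case4: "s > 2" "2 \<le> k" "k \<le> s - 1"
      "Tint nv mv k \<le> real \<delta>" "real \<delta> \<le> Tint nv mv (k - 1)"
    and first_vertex: "(nv 1, mv 1) \<noteq> (0, \<delta>)"
  shows "\<exists>r0>0. \<forall>r. 0 < r \<and> r < r0 \<longrightarrow>
           (\<forall>l. 0 < l \<and> l < real (nv k) / (real \<delta> - real (mv k)) \<longrightarrow>
              Alp (Dz \<times> UNIV) (skew p q) r l
                = basin (Dz \<times> UNIV) (skew p q) (0,0) - Ez (Dz \<times> UNIV) (skew p q))"
proof -
  obtain \<epsilon> where \<epsilon>: "0 < \<epsilon>" and p_dom: "\<And>z. norm z < \<epsilon> \<Longrightarrow> z \<in> Dz"
    and p_upper: "\<And>z. norm z < \<epsilon> \<Longrightarrow> norm (p z) \<le> norm z / 2"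
    and p_lower: "\<And>z. norm z < \<epsilon> \<Longrightarrow> norm a / 2 * norm z ^ \<delta> \<le> norm (p z)"
    and p_nz: "\<And>z. norm z < \<epsilon> \<Longrightarrow> z \<noteq> 0 \<Longrightarrow> p z \<noteq> 0"
    using superattracting_estimates[OF a_nz delta p_exp] by blast
  obtain \<rho> where \<rho>: "0 < \<rho>" and q_series: "\<And>z w. norm z < \<rho> \<Longrightarrow> norm w < \<rho> \<Longrightarrow>
      ((\<lambda>(i, j). b i j * z ^ i * w ^ j) has_sum q z w) UNIV"
    using q_exp by blast
  obtain K \<rho>1 where K: "0 < K" and \<rho>1: "0 < \<rho>1" "\<rho>1 < 1"
    and q_vertex: "\<And>z w. norm z < \<rho>1 \<Longrightarrow> norm w < \<rho>1 \<Longrightarrow>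
       norm (q z w) \<le> K * (\<Sum>k\<in>{k\<in>{1..s}. b (nv k) (mv k) \<noteq> 0}. norm z ^ nv k * norm w ^ mv k)"
    using norm_le_vertex_monomials_sum[OF verts \<rho> q_series] by blast
  obtain K1 where "0 < K1" "\<And>z w. norm z < \<rho>1 \<Longrightarrow> norm w < \<rho>1 \<Longrightarrow> norm (q z w) \<le> K1 * (norm z + (norm w)\<^sup>2)"
    using norm_le_linear_plus_square[OF b00 b01 less_imp_le[OF \<rho>1(2)] q_vertex K] by blast
  then obtain \<eta> where "0 < \<eta>" and bidisk: "\<And>z w. norm z < \<eta> \<Longrightarrow> norm w < \<eta> \<Longrightarrow> z \<noteq> 0 \<Longrightarrow>
       (z, w) \<in> basin (Dz \<times> UNIV) (skew p q) (0, 0) - Ez (Dz \<times> UNIV) (skew p q)"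
    using punctured_bidisk_subset_basin_diff_Ez[OF \<epsilon> p_dom p_upper p_nz \<rho>1(1)] by blast
  have "p 0 = 0"
    using p_upper[of 0] \<epsilon> by simp
  have k: "1 < k" "k < s"
    using case4(2,3) by linarith+
  show ?thesis
  proof (intro exI[of _ "min \<eta> 1"] conjI allI impI)
    fix r l assume "0 < r \<and> r < min \<eta> 1" "0 < l \<and> l < real (nv k) / (real \<delta> - real (mv k))"
    with case4_vertex_inequality[OF verts k case4(4,5) first_vertex]
    show "Alp (Dz \<times> UNIV) (skew p q) r l = basin (Dz \<times> UNIV) (skew p q) (0, 0) - Ez (Dz \<times> UNIV) (skew p q)"
      by (intro Alp_eq_basin_diff_Ez[OF \<open>p 0 = 0\<close> bidisk _ \<epsilon> p_lower \<rho>1(1) _ K q_vertex]) (use a_nz delta \<rho>1 in auto)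
  qed (use \<open>0 < \<eta>\<close> in simp)
qed

end
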